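(* Let $(X,\Sigma)$ be a measurable space, let $\boldsymbol{\mu}=(\mu_t)_{t\in[0,\infty)}$ be a family of monotone measures on $\Sigma$, let $(\mathcal{E}_t)_{t\ge 0}$ be a process of pavings and let $\mathscr{A}=\{\mathsf{A}_t(\cdot|E)\colon E\in\mathcal{E}_t,\,t\ge 0\}$ be a parametric family of conditional aggregation operators. Suppose that $\boldsymbol{\mu}$ is nonincreasing and $\mathscr{A}$ is nonincreasing. Then for every fixed $f\in\mathbf{F}$ the function $[0,\infty)\ni t\mapsto \boldsymbol{\mu}_{\mathscr{A}}(f,t)$ is nonincreasing.
   Context: $\Sigma^0=\Sigma\setminus\{\emptyset\}$. $\mathbf{F}$ denotes the set of all $\Sigma$-measurable, nonnegative, bounded functions $f\colon X\to[0,\infty)$. A monotone measure is a map $\mu\colon\Sigma\to[0,\infty]$ with $\mu(B)\le\mu(C)$ whenever $B\subseteq C$, $\mu(\emptyset)=0$ and $\mu(X)>0$. For $E\in\Sigma^0$, a conditional aggregation operator (CAO) w.r.t. $E$ is a map $\mathsf{A}(\cdot|E)\colon\mathbf{F}\to[0,\infty]$ such that (C1) $\mathsf{A}(f|E)\le\mathsf{A}(g|E)$ whenever $f(x)\le g(x)$ for all $x\in E$, and (C2) $\mathsf{A}(\mathbf{1}_{X\setminus E}|E)=0$. A process of pavings is a family $(\mathcal{E}_t)_{t\ge0}$ with $\emptyset\in\mathcal{E}_t\subseteq\Sigma$ for all $t$; $\mathcal{E}_t^0=\mathcal{E}_t\setminus\{\emptyset\}$. A parametric family of CAOs (pFCA)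 $\{\mathsf{A}_t(\cdot|E)\colon E\in\mathcal{E}_t,\,t\ge0\}$ consists of CAOs $\mathsf{A}_t(\cdot|E)$ w.r.t. $E$ for each $t$ and $E\in\mathcal{E}_t^0$, with the convention $\mathsf{A}_t(\cdot|\emptyset)=\infty$. The generalized level measure is $\boldsymbol{\mu}_{\mathscr{A}}(f,t)=\sup\{\mu_t(E)\colon \mathsf{A}_t(f|E)\ge t,\ E\in\mathcal{E}_t\}$ for $t\ge0$. The family $\boldsymbol{\mu}$ is nonincreasing if $\mu_s(E)\ge\mu_t(E)$ for all $E\in\Sigma$ and all $s<t$. The pFCA is nonincreasing if $\mathcal{E}_t\subseteq\mathcal{E}_s$ and $\mathsf{A}_s(f|E)\ge\mathsf{A}_t(f|E)$ for all $f\in\mathbf{F}$, all $E\in\mathcal{E}_t^0$ and all $0\le s<t$. *)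

theory Defs
  imports "HOL-Analysis.Analysis"
begin

definition Fcal :: "'a measure \<Rightarrow> ('a \<Rightarrow> real) set" where
  "Fcal M = {f. f \<in> borel_measurable M \<and> (\<forall>x\<in>space M. 0 \<le> f x)
                \<and> (\<exists>C. \<forall>x\<in>space M. f x \<le> C)}"

definition monotone_measure :: "'a measure \<Rightarrow> ('a set \<Rightarrow> ennreal) \<Rightarrow> bool" where
  "monotone_measure M \<mu> \<longleftrightarrow>
     (\<forall>B\<in>sets M. \<forall>C\<in>sets M. B \<subseteq> C \<longrightarrow> \<mu> B \<le> \<mu> C)
     \<and> \<mu> {} = 0 \<and> \<mu> (space M) > 0"

definition CAO :: "'a measure \<Rightarrow> 'a set \<Rightarrow> (('a \<Rightarrow> real) \<Rightarrow> ennreal) \<Rightarrow> bool" where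
  "CAO M E A \<longleftrightarrow> E \<in> sets M \<and> E \<noteq> {}
     \<and> (\<forall>f\<in>Fcal M. \<forall>g\<in>Fcal M. (\<forall>x\<in>E. f x \<le> g x) \<longrightarrow> A f \<le> A g)
     \<and> A (indicator (space M - E)) = 0"

definition process_of_pavings :: "'a measure \<Rightarrow> (real \<Rightarrow> 'a set set) \<Rightarrow> bool" where
  "process_of_pavings M \<E> \<longleftrightarrow> (\<forall>t\<ge>0. {} \<in> \<E> t \<and> \<E> t \<subseteq> sets M)"

text \<open>Parametric family of CAOs; A t f E is the value of A_t(f|E).
  The convention A_t(.|{}) = \<infinity> is built into the level measure below.\<close>
definition pFCA :: "'a measure \<Rightarrow> (real \<Rightarrow> 'a set set)
    \<Rightarrow> (real \<Rightarrow> ('a \<Rightarrow> real) \<Rightarrow> 'a set \<Rightarrow> ennreal) \<Rightarrow> bool" where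
  "pFCA M \<E> A \<longleftrightarrow> (\<forall>t\<ge>0. \<forall>E\<in>\<E> t - {{}}. CAO M E (\<lambda>f. A t f E))"

definition Aconv :: "(real \<Rightarrow> ('a \<Rightarrow> real) \<Rightarrow> 'a set \<Rightarrow> ennreal) \<Rightarrow> real \<Rightarrow> ('a \<Rightarrow> real) \<Rightarrow> 'a set \<Rightarrow> ennreal" where
  "Aconv A t f E = (if E = {} then \<infinity> else A t f E)"

definition gen_level_measure :: "(real \<Rightarrow> 'a set \<Rightarrow> ennreal) \<Rightarrow> (real \<Rightarrow> 'a set set)
    \<Rightarrow> (real \<Rightarrow> ('a \<Rightarrow> real) \<Rightarrow> 'a set \<Rightarrow> ennreal) \<Rightarrow> ('a \<Rightarrow> real) \<Rightarrow> real \<Rightarrow> ennreal" where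
  "gen_level_measure \<mu> \<E> A f t = Sup {\<mu> t E | E. E \<in> \<E> t \<and> Aconv A t f E \<ge> ennreal t}"

definition nonincreasing_measure_family :: "'a measure \<Rightarrow> (real \<Rightarrow> 'a set \<Rightarrow> ennreal) \<Rightarrow> bool" where
  "nonincreasing_measure_family M \<mu> \<longleftrightarrow>
     (\<forall>E\<in>sets M. \<forall>s t. 0 \<le> s \<longrightarrow> s < t \<longrightarrow> \<mu> t E \<le> \<mu> s E)"

definition nonincreasing_pFCA :: "'a measure \<Rightarrow> (real \<Rightarrow> 'a set set)
    \<Rightarrow> (real \<Rightarrow> ('a \<Rightarrow> real) \<Rightarrow> 'a set \<Rightarrow> ennreal) \<Rightarrow> bool" where
  "nonincreasing_pFCA M \<E> A \<longleftrightarrow>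
     (\<forall>s t. 0 \<le> s \<longrightarrow> s < t \<longrightarrow> \<E> t \<subseteq> \<E> s
        \<and> (\<forall>f\<in>Fcal M. \<forall>E\<in>\<E> t - {{}}. A t f E \<le> A s f E))"

end

theory Submission
  imports Defs
begin

text \<open>Raising the level from s to t shrinks the paving, lowers every measure and every aggregated
  value, and raises the threshold; so every set admissible at level t is admissible at level s,
  with no smaller measure, and the supremum can only decrease.\<close>

lemma gen_level_measure_le_gen_level_measure:
  assumes "s \<le> t"
    and "\<E> t \<subseteq> \<E> s"
    and "\<And>E. E \<in> \<E> t \<Longrightarrow> \<mu> t E \<le> \<mu> s E"
    and "\<And>E. E \<in> \<E> t \<Longrightarrow> Aconv A t f E \<le> Aconv A s f E"
  shows "gen_level_measure \<mu> \<E> A f t \<le> gen_level_measure \<mu> \<E> A f s"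
  unfolding gen_level_measure_def
proof (rule Sup_least)
  fix x assume "x \<in> {\<mu> t E |E. E \<in> \<E> t \<and> ennreal t \<le> Aconv A t f E}"
  then obtain E where x: "x = \<mu> t E" and E: "E \<in> \<E> t" and level: "ennreal t \<le> Aconv A t f E"
    by blast
  have "ennreal s \<le> ennreal t" using \<open>s \<le> t\<close> by (rule ennreal_leI)
  also note level
  also have "Aconv A t f E \<le> Aconv A s f E" using E by (rule assms(4))
  finally have "ennreal s \<le> Aconv A s f E" .
  then have "\<mu> s E \<le> Sup {\<mu> s E |E. E \<in> \<E> s \<and> ennreal s \<le> Aconv A s f E}"
    using assms(2) E by (intro Sup_upper) blast
  with assms(3)[OF E] show "x \<le> Sup {\<mu> s E |E. E \<in> \<E> s \<and> ennreal s \<le> Aconv A s f E}"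
    unfolding x by (rule order_trans)
qed

lemma Aconv_antimono:
  assumes "nonincreasing_pFCA M \<E> A" and "f \<in> Fcal M"
    and "0 \<le> s" and "s < t" and "E \<in> \<E> t"
  shows "Aconv A t f E \<le> Aconv A s f E"
  using assms unfolding nonincreasing_pFCA_def Aconv_def by auto

text \<open>Only the two monotonicity hypotheses and the measurability of the pavings are needed.\<close>

theorem proposition3p4:
  fixes M :: "'a measure"
    and \<mu> :: "real \<Rightarrow> 'a set \<Rightarrow> ennreal"
    and \<E> :: "real \<Rightarrow> 'a set set"
    and A :: "real \<Rightarrow> ('a \<Rightarrow> real) \<Rightarrow> 'a set \<Rightarrow> ennreal"
  assumes "\<And>t. 0 \<le> t \<Longrightarrow> monotone_measure M (\<mu> t)"
    and "process_of_pavings M \<E>"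
    and "pFCA M \<E> A"
    and "nonincreasing_measure_family M \<mu>"
    and "nonincreasing_pFCA M \<E> A"
    and "f \<in> Fcal M"
  shows "\<forall>s t. 0 \<le> s \<longrightarrow> s \<le> t \<longrightarrow> gen_level_measure \<mu> \<E> A f t \<le> gen_level_measure \<mu> \<E> A f s"
proof (intro allI impI)
  fix s t :: real
  assume "0 \<le> s" and "s \<le> t"
  show "gen_level_measure \<mu> \<E> A f t \<le> gen_level_measure \<mu> \<E> A f s"
  proof (cases "s = t")
    case False
    with \<open>s \<le> t\<close> have "s < t" by simp
    have "\<E> t \<subseteq> sets M"
      using assms(2) \<open>0 \<le> s\<close> \<open>s < t\<close> unfolding process_of_pavings_def by simp
    moreover have "\<E> t \<subseteq> \<E> s"
      using assms(5) \<open>0 \<le> s\<close> \<open>s < t\<close> unfolding nonincreasing_pFCA_def by blast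
    ultimately show ?thesis
      using assms(4) \<open>0 \<le> s\<close> \<open>s < t\<close> \<open>s \<le> t\<close>
      by (intro gen_level_measure_le_gen_level_measure Aconv_antimono[OF assms(5,6)])
        (auto simp: nonincreasing_measure_family_def)
  qed simp
qed

end
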